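(* Let $\ell_1,\ell_2\in\mathbb{N}$ and let $D$ be a digraph with $\delta^+(D)\ge\ell_1+\ell_2$. Then for every $v\in V(D)$ there are directed paths $P_1,P_2$ in $D$ of lengths $\ell_1$ and $\ell_2$ respectively, both starting at $v$, with $V(P_1)\cap V(P_2)=\{v\}$.
   Context: Digraphs are finite, loopless, without parallel arcs (digons allowed). $\delta^+(D)$ is the minimum out-degree; the length of a path is its number of arcs. *)

theory Defs
  imports Main
begin

text \<open>A digraph: finite vertex set V, arc set A of ordered pairs of vertices,
no loops. Parallel arcs are impossible since A is a set; digons (u,v),(v,u) allowed.\<close>
definition digraph :: "'a set \<Rightarrow> ('a \<times> 'a) set \<Rightarrow> bool" where
  "digraph V A \<longleftrightarrow> finite V \<and> A \<subseteq> V \<times> V \<and> (\<forall>v. (v, v) \<notin> A)"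

definition out_nbrs :: "('a \<times> 'a) set \<Rightarrow> 'a \<Rightarrow> 'a set" where
  "out_nbrs A v = {w. (v, w) \<in> A}"

definition out_degree :: "('a \<times> 'a) set \<Rightarrow> 'a \<Rightarrow> nat" where
  "out_degree A v = card (out_nbrs A v)"

definition min_outdeg_ge :: "'a set \<Rightarrow> ('a \<times> 'a) set \<Rightarrow> nat \<Rightarrow> bool" where
  "min_outdeg_ge V A k \<longleftrightarrow> (\<forall>v\<in>V. out_degree A v \<ge> k)"

definition dpath :: "'a set \<Rightarrow> ('a \<times> 'a) set \<Rightarrow> 'a list \<Rightarrow> bool" where
  "dpath V A p \<longleftrightarrow> p \<noteq> [] \<and> set p \<subseteq> V \<and> distinct p \<and>
     (\<forall>i. Suc i < length p \<longrightarrow> (p ! i, p ! Suc i) \<in> A)"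

definition path_len :: "'a list \<Rightarrow> nat" where
  "path_len p = length p - 1"

end

theory Submission
  imports Defs
begin

text \<open>Paths are grown greedily, one arc at a time. If a path of length \<open>k\<close> from \<open>v\<close> meets a
  given set \<open>S \<ni> v\<close> only in \<open>v\<close>, then together with \<open>S\<close> it uses \<open>card S + k\<close> vertices; its
  last vertex has at least \<open>\<ell>\<^sub>1 + \<ell>\<^sub>2\<close> out-neighbours, none of them itself, so as long as
  \<open>card S + k \<le> \<ell>\<^sub>1 + \<ell>\<^sub>2\<close> one of them is unused and extends the path. Build \<open>P\<^sub>1\<close> with
  \<open>S = {v}\<close>, then \<open>P\<^sub>2\<close> with \<open>S = V(P\<^sub>1)\<close>, which has \<open>\<ell>\<^sub>1 + 1\<close> vertices.\<close>

lemma out_nbrs_subset: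
  assumes "digraph V A"
  shows "out_nbrs A w \<subseteq> V - {w}"
  using assms unfolding digraph_def out_nbrs_def by auto

lemma out_nbr_outside:
  assumes "digraph V A" and "min_outdeg_ge V A d" and "w \<in> V"
    and "finite T" and "w \<in> T" and "card T \<le> d"
  obtains u where "(w, u) \<in> A" and "u \<notin> T"
proof -
  have "\<not> out_nbrs A w \<subseteq> T"
  proof
    assume "out_nbrs A w \<subseteq> T"
    with out_nbrs_subset[OF assms(1)] have "out_nbrs A w \<subseteq> T - {w}" by blast
    then have "card (out_nbrs A w) \<le> card T - 1"
      using \<open>finite T\<close> \<open>w \<in> T\<close> by (metis card_Diff_singleton card_mono finite_Diff)
    moreover have "d \<le> card (out_nbrs A w)"
      using assms(2,3) unfolding min_outdeg_ge_def out_degree_def by blast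
    moreover have "card T > 0" using \<open>finite T\<close> \<open>w \<in> T\<close> card_gt_0_iff by blast
    ultimately show False using \<open>card T \<le> d\<close> by linarith
  qed
  then show thesis using that unfolding out_nbrs_def by blast
qed

lemma length_dpath:
  assumes "dpath V A P"
  shows "length P = path_len P + 1"
  using assms unfolding dpath_def path_len_def by (cases P) auto

lemma card_set_dpath:
  assumes "dpath V A P"
  shows "card (set P) = path_len P + 1"
  using assms length_dpath[OF assms] distinct_card unfolding dpath_def by metis

lemma dpath_snoc:
  assumes "dpath V A P" and "(last P, u) \<in> A" and "u \<in> V" and "u \<notin> set P"
  shows "dpath V A (P @ [u])"
  unfolding dpath_def
proof (intro conjI allI impI)
  have P: "P \<noteq> []" "set P \<subseteq> V" "distinct P"
    and arcs: "\<And>i. Suc i < length P \<Longrightarrow> (P ! i, P ! Suc i) \<in> A"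
    using assms(1) unfolding dpath_def by auto
  show "P @ [u] \<noteq> []" "set (P @ [u]) \<subseteq> V" "distinct (P @ [u])"
    using P assms(3,4) by auto
  fix i assume i: "Suc i < length (P @ [u])"
  show "((P @ [u]) ! i, (P @ [u]) ! Suc i) \<in> A"
  proof (cases "Suc i < length P")
    case True
    then show ?thesis using arcs by (simp add: nth_append)
  next
    case False
    then have "i = length P - 1" "Suc i = length P" using i by auto
    then show ?thesis using assms(2) P(1) by (simp add: nth_append last_conv_nth)
  qed
qed

lemma dpath_avoiding:
  assumes "digraph V A" and "min_outdeg_ge V A d" and "v \<in> V"
    and "finite S" and "v \<in> S" and "card S + k \<le> d + 1"
  shows "\<exists>P. dpath V A P \<and> path_len P = k \<and> hd P = v \<and> set P \<inter> S = {v}"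
  using assms(6)
proof (induction k)
  case 0
  show ?case using assms(3,5) by (intro exI[of _ "[v]"]) (auto simp: dpath_def path_len_def)
next
  case (Suc k)
  then obtain P where P: "dpath V A P" "path_len P = k" "hd P = v" "set P \<inter> S = {v}"
    by auto
  have "P \<noteq> []" "set P \<subseteq> V" using P(1) unfolding dpath_def by auto
  define T where "T = S \<union> set P"
  have "card T = card S + k"
    using card_Un_Int[OF \<open>finite S\<close> finite_set[of P]] card_set_dpath[OF P(1)] P(2,4)
    unfolding T_def by (simp add: Int_commute)
  moreover have "last P \<in> V" "last P \<in> T"
    using \<open>P \<noteq> []\<close> \<open>set P \<subseteq> V\<close> unfolding T_def by auto
  ultimately obtain u where u: "(last P, u) \<in> A" "u \<notin> T"
    using out_nbr_outside[OF assms(1,2), of "last P" T] Suc.prems \<open>finite S\<close>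
    unfolding T_def by auto
  have "u \<in> V" using u(1) assms(1) unfolding digraph_def by auto
  with P u have "dpath V A (P @ [u])" by (intro dpath_snoc) (auto simp: T_def)
  moreover have "path_len (P @ [u]) = Suc k"
    using length_dpath[OF P(1)] P(2) unfolding path_len_def by simp
  moreover have "set (P @ [u]) \<inter> S = {v}" using P(4) u(2) unfolding T_def by auto
  ultimately show ?case using P(3) \<open>P \<noteq> []\<close> by (intro exI[of _ "P @ [u]"]) simp
qed

theorem lemma3p1:
  fixes V :: "'a set" and A :: "('a \<times> 'a) set" and l1 l2 :: nat
  assumes "digraph V A"
    and "min_outdeg_ge V A (l1 + l2)"
    and "v \<in> V"
  shows "\<exists>P1 P2. dpath V A P1 \<and> dpath V A P2 \<and>
           path_len P1 = l1 \<and> path_len P2 = l2 \<and>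
           hd P1 = v \<and> hd P2 = v \<and> set P1 \<inter> set P2 = {v}"
proof -
  obtain P1 where P1: "dpath V A P1" "path_len P1 = l1" "hd P1 = v"
    using dpath_avoiding[OF assms, of "{v}" l1] by auto
  have "v \<in> set P1" using P1(1,3) unfolding dpath_def by auto
  moreover have "card (set P1) = l1 + 1" using card_set_dpath[OF P1(1)] P1(2) by simp
  ultimately obtain P2 where P2: "dpath V A P2" "path_len P2 = l2" "hd P2 = v"
    "set P2 \<inter> set P1 = {v}"
    using dpath_avoiding[OF assms, of "set P1" l2] by auto
  show ?thesis using P1 P2 by blast
qed

end
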